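(* Let $\mathbf{X}\in\mathcal{X}$ be a covariate vector, $A\in\{1,\dots,k\}$ ($k\ge 2$) a treatment, and $Y>0$ a bounded outcome (smaller is better), with $p(A=j\mid\mathbf{X})>0$ almost everywhere for every $j$. Let $\mu_j(\mathbf{x})=\mathbb{E}(Y\mid \mathbf{X}=\mathbf{x},A=j)$ and let $\mu_{(1)}(\mathbf{x})=\min_j\mu_j(\mathbf{x})$. Fix $c\ge 1$ and define the optimal A-ITR $\phi^*(\mathbf{x})=\{j:\ \mu_j(\mathbf{x})/\mu_{(1)}(\mathbf{x})\le c\}$. Let $\ell_D:\mathbb{R}\to\mathbb{R}$ be convex and differentiable with $\ell_D'(u)>0$ for all $u$, and let $$\mathbf{f}^*=\operatorname{argmin}_{\mathbf{f}:\mathcal{X}\to\mathbb{R}^{k-1}}\mathbb{E}\left[\frac{Y}{p(A\mid\mathbf{X})}\ell_D(\langle \mathbf{W}_A,\mathbf{f}(\mathbf{X})\rangle)\right].$$ For $\mathbf{x}\in\mathcal{X}$, order the vertices so that $\langle\mathbf{W}_{(1)},\mathbf{f}^*(\mathbf{x})\rangle>\dots>\langle\mathbf{W}_{(k)},\mathbf{f}^*(\mathbf{x})\rangle$ and define $$\phi^D_{\mathbf{f}^*}(\mathbf{x})=\left\{j:\ \frac{\ell_D'(\langle\mathbf{W}_{(1)},\mathbf{f}^*(\mathbf{x})\rangle)}{\ell_D'(\langle\mathbf{W}_j,\mathbf{f}^*(\mathbf{x})\rangle)}\le c\right\}.$$ Then $\phi^D_{\mathbf{f}^*}$ coincides wi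th $\phi^*$.
   Context: $\mathbf{W}_1,\dots,\mathbf{W}_k\in\mathbb{R}^{k-1}$ are the vertices of a simplex: $\mathbf{W}_1=(k-1)^{-1/2}\mathbf{1}_{k-1}$ and $\mathbf{W}_j=-(1+k^{1/2})(k-1)^{-3/2}\mathbf{1}_{k-1}+[k/(k-1)]^{1/2}\mathbf{e}_{j-1}$ for $2\le j\le k$, where $\mathbf{1}_{k-1}$ is the all-ones vector and $\mathbf{e}_{j-1}$ the $(j-1)$th standard basis vector of $\mathbb{R}^{k-1}$. The conditional means are assumed strictly ordered, $\mu_{(1)}<\dots<\mu_{(k)}$. An A-ITR is a map from $\mathcal{X}$ to nonempty subsets of $\{1,\dots,k\}$. *)

theory Defs
  imports "HOL-Probability.Probability"
begin

text \<open>Simplex vertex W_j in R^(k-1); vectors of R^(k-1) are functions nat => real,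
  only the coordinates 1..k-1 matter.\<close>
definition simplex_vertex :: "nat \<Rightarrow> nat \<Rightarrow> nat \<Rightarrow> real" where
  "simplex_vertex k j i =
     (if j = 1 then 1 / sqrt (real k - 1)
      else - (1 + sqrt (real k)) / (real k - 1) powr (3/2)
           + (if i = j - 1 then sqrt (real k / (real k - 1)) else 0))"

definition vinner :: "nat \<Rightarrow> (nat \<Rightarrow> real) \<Rightarrow> (nat \<Rightarrow> real) \<Rightarrow> real" where
  "vinner k w v = (\<Sum>i\<in>{1..k-1}. w i * v i)"

text \<open>Conditional mean mu_j(x) = E(Y | X = x, A = j), where K j x is the conditional
  law of Y given X = x, A = j.\<close>
definition cond_mean :: "(nat \<Rightarrow> 'x \<Rightarrow> real measure) \<Rightarrow> nat \<Rightarrow> 'x \<Rightarrow> real" where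
  "cond_mean K j x = (\<integral>y. y \<partial>(K j x))"

text \<open>Conditional expectation given X = x of Y / p(A|X) * l(<W_A, f(X)>),
  A | X = x distributed as p(.|x), Y | X = x, A = j distributed as K j x.\<close>
definition ipw_integrand ::
  "(nat \<Rightarrow> 'x \<Rightarrow> real) \<Rightarrow> (nat \<Rightarrow> 'x \<Rightarrow> real measure) \<Rightarrow> (real \<Rightarrow> real) \<Rightarrow> nat
    \<Rightarrow> ('x \<Rightarrow> nat \<Rightarrow> real) \<Rightarrow> 'x \<Rightarrow> real" where
  "ipw_integrand p K l k f x =
     (\<Sum>j\<in>{1..k}. p j x *
        (\<integral>y. y / p j x * l (vinner k (simplex_vertex k j) (f x)) \<partial>(K j x)))"

definition ipw_risk ::
  "'x measure \<Rightarrow> (nat \<Rightarrow> 'x \<Rightarrow> real) \<Rightarrow> (nat \<Rightarrow> 'x \<Rightarrow> real measure) \<Rightarrow> (real \<Rightarrow> real)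
    \<Rightarrow> nat \<Rightarrow> ('x \<Rightarrow> nat \<Rightarrow> real) \<Rightarrow> real" where
  "ipw_risk M p K l k f = (\<integral>x. ipw_integrand p K l k f x \<partial>M)"

definition admissible ::
  "'x measure \<Rightarrow> (nat \<Rightarrow> 'x \<Rightarrow> real) \<Rightarrow> (nat \<Rightarrow> 'x \<Rightarrow> real measure) \<Rightarrow> (real \<Rightarrow> real)
    \<Rightarrow> nat \<Rightarrow> ('x \<Rightarrow> nat \<Rightarrow> real) \<Rightarrow> bool" where
  "admissible M p K l k f \<longleftrightarrow>
     (\<forall>i\<in>{1..k-1}. (\<lambda>x. f x i) \<in> borel_measurable M) \<and>
     integrable M (ipw_integrand p K l k f)"

definition opt_AITR :: "nat \<Rightarrow> real \<Rightarrow> (nat \<Rightarrow> real) \<Rightarrow> nat set" where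
  "opt_AITR k c mu = {j\<in>{1..k}. mu j / Min (mu ` {1..k}) \<le> c}"

text \<open>phi^D_f(x): W_(1) is the vertex with the largest inner product with f(x).\<close>
definition AITR_D :: "nat \<Rightarrow> (real \<Rightarrow> real) \<Rightarrow> real \<Rightarrow> (nat \<Rightarrow> real) \<Rightarrow> nat set" where
  "AITR_D k l' c v =
     {j\<in>{1..k}. l' (Max ((\<lambda>i. vinner k (simplex_vertex k i) v) ` {1..k}))
                 / l' (vinner k (simplex_vertex k j) v) \<le> c}"

end

theory Submission
  imports Defs
begin

text \<open>Minimality of fstar forces, for almost every x, that no coordinate step of size 1/(n+1)
  decreases the conditional risk v \<mapsto> \<Sum>j. mu j(x) l(<W_j, v>) at v = fstar x: otherwise
  performing that step on a set of positive measure would lower the risk, and since the steps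
  form a countable family the exceptional null sets can be united. Hence the gradient
  \<Sum>j. mu j(x) l'(<W_j, fstar x>) W_j vanishes. The only linear relation among the simplex
  vertices is \<Sum>j. W_j = 0, so mu j(x) l'(<W_j, fstar x>) does not depend on j. As l' is
  positive and nondecreasing, the largest inner product belongs to the smallest conditional
  mean, and the ratio of derivatives defining AITR_D is mu j(x) / Min mu(x).\<close>

lemma vinner_fun_upd_add:
  assumes "i \<in> {1..k-1}"
  shows "vinner k w (v(i := v i + t)) = vinner k w v + t * w i"
proof -
  have "vinner k w (v(i := v i + t)) = (\<Sum>i'\<in>{1..k-1}. w i' * v i' + (if i' = i then t * w i else 0))"
    unfolding vinner_def by (intro sum.cong) (auto simp: algebra_simps)
  also have "\<dots> = vinner k w v + t * w i"
    using assms by (simp add: sum.distrib vinner_def)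
  finally show ?thesis .
qed

lemma vinner_measurable:
  assumes "\<forall>i\<in>{1..k-1}. (\<lambda>x. f x i) \<in> borel_measurable M"
  shows "(\<lambda>x. vinner k w (f x)) \<in> borel_measurable M"
  unfolding vinner_def using assms by (intro borel_measurable_sum borel_measurable_times) auto

lemma simplex_vertex_coeff_relation:
  assumes "k \<ge> 2"
  shows "- (1 + sqrt (real k)) / (real k - 1) powr (3/2) * (real k - 1) + sqrt (real k / (real k - 1))
         = - (1 / sqrt (real k - 1))"
proof -
  define r where "r = sqrt (real k - 1)"
  have k1: "real k - 1 > 0" using assms by simp
  then have r: "r > 0" by (simp add: r_def)
  have "(real k - 1) powr (3/2) = (real k - 1) powr 1 * (real k - 1) powr (1/2)"
    by (subst powr_add[symmetric]) simp
  also have "\<dots> = (real k - 1) * r" using k1 by (simp add: powr_half_sqrt r_def)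
  finally have powr: "(real k - 1) powr (3/2) = (real k - 1) * r" .
  have sqrt: "sqrt (real k / (real k - 1)) = sqrt (real k) / r" by (simp add: r_def real_sqrt_divide)
  show ?thesis unfolding powr sqrt r_def[symmetric] using r k1 by (simp add: field_simps)
qed

text \<open>Coordinate i of \<Sum>j. lam j W_j is lam 1 * al + be * (lam 2 + ... + lam k) + ga * lam (i + 1),
  so lam 2 = ... = lam k, and the relation be * (k - 1) + ga = - al then forces the same value
  on lam 1.\<close>
lemma simplex_vertex_lincomb_zero_imp_const:
  assumes k: "k \<ge> 2"
    and zero: "\<forall>i\<in>{1..k-1}. (\<Sum>j\<in>{1..k}. lam j * simplex_vertex k j i) = 0"
  shows "\<forall>j\<in>{1..k}. lam j = lam 1"
proof -
  define al where "al = 1 / sqrt (real k - 1)"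
  define be where "be = - (1 + sqrt (real k)) / (real k - 1) powr (3/2)"
  define ga where "ga = sqrt (real k / (real k - 1))"
  define S where "S = (\<Sum>j\<in>{2..k}. lam j)"
  have k1: "real k - 1 > 0" using k by simp
  have al0: "al > 0" using k1 by (simp add: al_def)
  have ga0: "ga > 0" using k1 by (simp add: ga_def)
  have coord: "lam 1 * al + be * S + ga * lam (i + 1) = 0" if i: "i \<in> {1..k-1}" for i
  proof -
    have "i + 1 \<in> {2..k}" using i by auto
    have "(\<Sum>j\<in>{1..k}. lam j * simplex_vertex k j i)
        = lam 1 * al + (\<Sum>j\<in>{2..k}. lam j * be + (if j = i + 1 then lam j * ga else 0))"
      using k by (subst sum.atLeast_Suc_atMost)
        (auto simp: simplex_vertex_def al_def be_def ga_def algebra_simps intro!: sum.cong)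
    also have "\<dots> = lam 1 * al + be * S + ga * lam (i + 1)"
      using i k \<open>i + 1 \<in> {2..k}\<close> by (simp add: sum.distrib S_def sum_distrib_left mult.commute)
    finally show ?thesis using zero i by simp
  qed
  define c0 where "c0 = - (lam 1 * al + be * S) / ga"
  have tail: "lam j = c0" if "j \<in> {2..k}" for j
  proof -
    have "j - 1 \<in> {1..k-1}" "j - 1 + 1 = j" using that by auto
    with coord[of "j - 1"] show ?thesis using ga0 by (simp add: c0_def field_simps)
  qed
  have "S = (\<Sum>j\<in>{2..k}. c0)" unfolding S_def using tail by (intro sum.cong) auto
  then have S: "S = (real k - 1) * c0" using k by simp
  have "lam 1 * al + be * S + ga * c0 = 0"
    using coord[of 1] tail[of 2] k by (simp add: numeral_2_eq_2)
  moreover have "ga = - al - be * (real k - 1)"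
    using simplex_vertex_coeff_relation[OF k] by (simp add: al_def be_def ga_def)
  ultimately have "al * (lam 1 - c0) = 0" unfolding S by (simp add: algebra_simps)
  then have "lam 1 = c0" using al0 by simp
  then show ?thesis using tail by (metis atLeastAtMost_iff le_antisym not_less_eq_eq one_add_one plus_1_eq_Suc)
qed

lemma convex_on_UNIV_deriv_mono:
  fixes l l' :: "real \<Rightarrow> real"
  assumes convex: "convex_on UNIV l" and deriv: "\<forall>u. (l has_real_derivative l' u) (at u)"
    and "a \<le> b"
  shows "l' a \<le> l' b"
proof (cases "a = b")
  case False
  have "l b - l a \<ge> l' a * (b - a)" "l a - l b \<ge> l' b * (a - b)"
    by (rule convex_on_imp_above_tangent[OF convex], use deriv in auto)+
  then have "l' a * (b - a) \<le> l' b * (b - a)" by (simp add: algebra_simps)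
  then show ?thesis using \<open>a \<le> b\<close> False by simp
qed simp

lemma DERIV_zero_if_no_descent_at_inverse_nat:
  fixes \<phi> :: "real \<Rightarrow> real"
  assumes deriv: "(\<phi> has_real_derivative D) (at 0)"
    and right: "\<And>n. \<phi> 0 \<le> \<phi> (1 / Suc n)" and left: "\<And>n. \<phi> 0 \<le> \<phi> (- 1 / Suc n)"
  shows "D = 0"
proof (rule ccontr)
  assume "D \<noteq> 0"
  then consider "D > 0" | "D < 0" by linarith
  then show False
  proof cases
    case 1
    obtain d where "d > 0" and d: "\<And>h. 0 < h \<Longrightarrow> h < d \<Longrightarrow> \<phi> (0 - h) < \<phi> 0"
      using DERIV_pos_inc_left[OF deriv 1] by blast
    obtain n where "inverse (real (Suc n)) < d"
      using reals_Archimedean[OF \<open>d > 0\<close>] by blast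
    then show False using d[of "1 / Suc n"] left[of n] by (simp add: divide_inverse)
  next
    case 2
    obtain d where "d > 0" and d: "\<And>h. 0 < h \<Longrightarrow> h < d \<Longrightarrow> \<phi> 0 > \<phi> (0 + h)"
      using DERIV_neg_dec_right[OF deriv 2] by blast
    obtain n where "inverse (real (Suc n)) < d"
      using reals_Archimedean[OF \<open>d > 0\<close>] by blast
    then show False using d[of "1 / Suc n"] right[of n] by (simp add: divide_inverse)
  qed
qed

definition cond_risk :: "(nat \<Rightarrow> real) \<Rightarrow> (real \<Rightarrow> real) \<Rightarrow> nat \<Rightarrow> (nat \<Rightarrow> real) \<Rightarrow> real" where
  "cond_risk mu l k v = (\<Sum>j\<in>{1..k}. mu j * l (vinner k (simplex_vertex k j) v))"

lemma cond_risk_coordinate_deriv: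
  assumes deriv: "\<forall>u. (l has_real_derivative l' u) (at u)" and i: "i \<in> {1..k-1}"
  shows "((\<lambda>t. cond_risk mu l k (v(i := v i + t))) has_real_derivative
           (\<Sum>j\<in>{1..k}. mu j * l' (vinner k (simplex_vertex k j) v) * simplex_vertex k j i)) (at 0)"
proof -
  have "((\<lambda>t. \<Sum>j\<in>{1..k}. mu j * l (vinner k (simplex_vertex k j) v + t * simplex_vertex k j i))
        has_real_derivative (\<Sum>j\<in>{1..k}. mu j * (l' (vinner k (simplex_vertex k j) v + 0 * simplex_vertex k j i)
           * (0 * 0 + 1 * simplex_vertex k j i)))) (at 0)"
    using deriv by (intro DERIV_sum DERIV_cmult DERIV_chain2[of l] derivative_eq_intros) auto
  then show ?thesis by (simp add: cond_risk_def vinner_fun_upd_add[OF i] mult.assoc)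
qed

lemma cond_risk_stationary_if_no_coordinate_descent:
  assumes deriv: "\<forall>u. (l has_real_derivative l' u) (at u)" and i: "i \<in> {1..k-1}"
    and "\<And>n. cond_risk mu l k v \<le> cond_risk mu l k (v(i := v i + 1 / Suc n))"
    and "\<And>n. cond_risk mu l k v \<le> cond_risk mu l k (v(i := v i + - 1 / Suc n))"
  shows "(\<Sum>j\<in>{1..k}. mu j * l' (vinner k (simplex_vertex k j) v) * simplex_vertex k j i) = 0"
  by (rule DERIV_zero_if_no_descent_at_inverse_nat[OF cond_risk_coordinate_deriv[OF deriv i]])
    (use assms in simp_all)

text \<open>Stationarity makes mu j * l' (<W_j, v>) independent of j; since l' is positive and
  nondecreasing, the vertex with the largest inner product has the smallest mu j.\<close>
lemma AITR_D_eq_opt_AITR_if_stationary: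
  fixes l l' :: "real \<Rightarrow> real" and mu :: "nat \<Rightarrow> real"
  assumes k: "k \<ge> 2" and mu: "\<forall>j\<in>{1..k}. mu j > 0"
    and convex: "convex_on UNIV l" and deriv: "\<forall>u. (l has_real_derivative l' u) (at u)"
    and l'_pos: "\<forall>u. l' u > 0"
    and stationary: "\<forall>i\<in>{1..k-1}.
      (\<Sum>j\<in>{1..k}. mu j * l' (vinner k (simplex_vertex k j) v) * simplex_vertex k j i) = 0"
  shows "AITR_D k l' c v = opt_AITR k c mu"
proof -
  define a where "a j = vinner k (simplex_vertex k j) v" for j
  define L where "L = mu 1 * l' (a 1)"
  have one: "1 \<in> {1..k}" using k by simp
  have const: "\<forall>j\<in>{1..k}. mu j * l' (a j) = L"
    unfolding L_def by (rule simplex_vertex_lincomb_zero_imp_const[OF k])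
      (use stationary in \<open>simp add: a_def\<close>)
  have "L > 0" unfolding L_def using mu l'_pos one by auto
  have l'_a: "l' (a j) = L / mu j" if "j \<in> {1..k}" for j
  proof -
    have "mu j * l' (a j) = L" "mu j > 0" using const mu that by auto
    then show ?thesis by (simp add: field_simps)
  qed
  obtain m where m: "m \<in> {1..k}" "Max (a ` {1..k}) = a m"
    using Max_in[of "a ` {1..k}"] one by (metis empty_iff finite_atLeastAtMost finite_imageI imageE image_eqI)
  have "mu m \<le> mu j" if j: "j \<in> {1..k}" for j
  proof -
    have "a j \<le> a m" using m j by (metis Max_ge finite_atLeastAtMost finite_imageI image_eqI)
    then have "L / mu j \<le> L / mu m"
      using convex_on_UNIV_deriv_mono[OF convex deriv] l'_a[OF j] l'_a[OF m(1)] by metis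
    then show ?thesis using mu j m(1) \<open>L > 0\<close> by (simp add: divide_simps)
  qed
  then have "Min (mu ` {1..k}) = mu m" using m(1) by (intro Min_eqI) auto
  moreover have "l' (a m) / l' (a j) = mu j / mu m" if "j \<in> {1..k}" for j
    using l'_a[OF that] l'_a[OF m(1)] \<open>L > 0\<close> mu that m(1) by (simp add: field_simps)
  ultimately show ?thesis
    unfolding AITR_D_def opt_AITR_def using m(2) by (auto simp: a_def)
qed

lemma integral_id_pos_if_bounded:
  fixes N :: "real measure"
  assumes "prob_space N" and "sets N = sets borel" and "AE y in N. 0 < y \<and> y \<le> B"
  shows "0 < (\<integral>y. y \<partial>N)"
proof -
  interpret prob_space N by fact
  have "(\<lambda>y. y) \<in> borel_measurable N" by (subst measurable_cong_sets[OF assms(2) refl]) simp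
  then have "integrable N (\<lambda>y. y)"
    using assms(3) by (intro integrable_const_bound[where B=B]) (auto elim: eventually_mono)
  then have "(\<integral>y. - y \<partial>N) < 0"
    using assms(3) by (intro expectation_less) (auto elim: eventually_mono)
  then show ?thesis by simp
qed

lemma cond_mean_pos:
  assumes "K j \<in> M \<rightarrow>\<^sub>M prob_algebra borel" and "x \<in> space M"
    and "AE y in K j x. 0 < y \<and> y \<le> B"
  shows "0 < cond_mean K j x"
proof -
  have "K j x \<in> space (prob_algebra borel)" using measurable_space[OF assms(1,2)] .
  then have "prob_space (K j x)" "sets (K j x) = sets borel" by (auto simp: space_prob_algebra)
  then show ?thesis unfolding cond_mean_def using integral_id_pos_if_bounded assms(3) by blast
qed

lemma cond_mean_measurable:
  assumes "K j \<in> M \<rightarrow>\<^sub>M prob_algebra borel"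
  shows "cond_mean K j \<in> borel_measurable M"
  using measurable_compose[OF measurable_prob_algebraD[OF assms]
      integral_measurable_subprob_algebra[of "\<lambda>y::real. y" borel]]
  unfolding cond_mean_def by simp

lemma ipw_integrand_eq:
  "ipw_integrand p K l k f x = (\<Sum>j\<in>{1..k}.
     if p j x = 0 then 0 else cond_mean K j x * l (vinner k (simplex_vertex k j) (f x)))"
  unfolding ipw_integrand_def cond_mean_def by (intro sum.cong) (auto simp: field_simps)

lemma ipw_integrand_eq_cond_risk:
  assumes "\<forall>j\<in>{1..k}. p j x \<noteq> 0"
  shows "ipw_integrand p K l k f x = cond_risk (\<lambda>j. cond_mean K j x) l k (f x)"
  unfolding ipw_integrand_eq cond_risk_def using assms by (intro sum.cong) auto

lemma ipw_integrand_measurable: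
  assumes p: "\<forall>j\<in>{1..k}. p j \<in> borel_measurable M"
    and K: "\<forall>j\<in>{1..k}. K j \<in> M \<rightarrow>\<^sub>M prob_algebra borel"
    and l: "l \<in> borel_measurable borel"
    and f: "\<forall>i\<in>{1..k-1}. (\<lambda>x. f x i) \<in> borel_measurable M"
  shows "ipw_integrand p K l k f \<in> borel_measurable M"
  unfolding ipw_integrand_eq[abs_def]
proof (intro borel_measurable_sum)
  fix j assume j: "j \<in> {1..k}"
  note [measurable] = p[rule_format, OF j] cond_mean_measurable[of K j, OF K[rule_format, OF j]]
    measurable_compose[OF vinner_measurable[OF f] l]
  show "(\<lambda>x. if p j x = 0 then 0 else cond_mean K j x * l (vinner k (simplex_vertex k j) (f x)))
      \<in> borel_measurable M"
    by measurable
qed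

text \<open>Replacing g by h only where moreover |h| \<le> N keeps the replacement integrable; these
  sets exhaust {h < g}.\<close>
lemma (in finite_measure) AE_le_if_integral_minimal_under_replacement:
  fixes g h :: "'a \<Rightarrow> real"
  assumes g: "integrable M g" and h: "h \<in> borel_measurable M"
    and minimal: "\<And>E. E \<in> sets M \<Longrightarrow> integrable M (\<lambda>x. if x \<in> E then h x else g x) \<Longrightarrow>
      (\<integral>x. g x \<partial>M) \<le> (\<integral>x. (if x \<in> E then h x else g x) \<partial>M)"
  shows "AE x in M. g x \<le> h x"
proof -
  define E where "E N = {x \<in> space M. h x < g x \<and> \<bar>h x\<bar> \<le> real N}" for N :: nat
  have "AE x in M. x \<notin> E N" for N
  proof (rule ccontr)
    assume not_null: "\<not> (AE x in M. x \<notin> E N)"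
    have [measurable]: "g \<in> borel_measurable M" using g by simp
    note [measurable] = h
    have E: "E N \<in> sets M" unfolding E_def by measurable
    have "emeasure M (E N) \<noteq> 0" using not_null E AE_not_in[of "E N" M] by auto
    let ?g' = "\<lambda>x. if x \<in> E N then h x else g x"
    have g': "integrable M ?g'"
    proof (rule Bochner_Integration.integrable_bound[where f="\<lambda>x. \<bar>g x\<bar> + real N"])
      show "integrable M (\<lambda>x. \<bar>g x\<bar> + real N)" using g by simp
      show "?g' \<in> borel_measurable M" using E by measurable
      show "AE x in M. norm (?g' x) \<le> norm (\<bar>g x\<bar> + real N)" by (auto simp: E_def)
    qed
    have "(\<integral>x. ?g' x \<partial>M) < (\<integral>x. g x \<partial>M)"
      by (rule integral_less_AE[OF g' g \<open>emeasure M (E N) \<noteq> 0\<close> E]) (auto simp: E_def)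
    with minimal[OF E g'] show False by simp
  qed
  then have "AE x in M. \<forall>N. x \<notin> E N" by (simp add: AE_all_countable)
  with AE_space show ?thesis
  proof eventually_elim
    case (elim x)
    show "g x \<le> h x"
    proof (rule ccontr)
      assume "\<not> g x \<le> h x"
      then have "x \<in> E (nat \<lceil>\<bar>h x\<bar>\<rceil>)" using elim real_nat_ceiling_ge unfolding E_def by auto
      with elim show False by blast
    qed
  qed
qed

lemma (in finite_measure) ipw_minimizer_AE_le:
  assumes p: "\<forall>j\<in>{1..k}. p j \<in> borel_measurable M"
    and K: "\<forall>j\<in>{1..k}. K j \<in> M \<rightarrow>\<^sub>M prob_algebra borel"
    and l: "l \<in> borel_measurable borel"
    and fstar: "admissible M p K l k fstar"
    and minimal: "\<forall>f. admissible M p K l k f \<longrightarrow> ipw_risk M p K l k fstar \<le> ipw_risk M p K l k f"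
    and f: "\<forall>i\<in>{1..k-1}. (\<lambda>x. f x i) \<in> borel_measurable M"
  shows "AE x in M. ipw_integrand p K l k fstar x \<le> ipw_integrand p K l k f x"
proof (rule AE_le_if_integral_minimal_under_replacement)
  show "integrable M (ipw_integrand p K l k fstar)" using fstar by (simp add: admissible_def)
  show "ipw_integrand p K l k f \<in> borel_measurable M"
    using ipw_integrand_measurable[OF p K l f] .
next
  fix E assume E: "E \<in> sets M"
    and int: "integrable M (\<lambda>x. if x \<in> E then ipw_integrand p K l k f x else ipw_integrand p K l k fstar x)"
  define f' where "f' x = (if x \<in> E then f x else fstar x)" for x
  have ipw_f': "ipw_integrand p K l k f' =
      (\<lambda>x. if x \<in> E then ipw_integrand p K l k f x else ipw_integrand p K l k fstar x)"
    by (auto simp: f'_def ipw_integrand_def)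
  have "(\<lambda>x. f' x i) = (\<lambda>x. if x \<in> E then f x i else fstar x i)" for i
    by (simp add: f'_def fun_eq_iff)
  then have "\<forall>i\<in>{1..k-1}. (\<lambda>x. f' x i) \<in> borel_measurable M"
    using f fstar E by (auto simp: admissible_def intro!: measurable_If_set)
  then have "admissible M p K l k f'" using int by (simp add: admissible_def ipw_f')
  then have "ipw_risk M p K l k fstar \<le> ipw_risk M p K l k f'" using minimal by blast
  then show "(\<integral>x. ipw_integrand p K l k fstar x \<partial>M) \<le>
      (\<integral>x. (if x \<in> E then ipw_integrand p K l k f x else ipw_integrand p K l k fstar x) \<partial>M)"
    by (simp add: ipw_risk_def ipw_f')
qed

lemma fun_upd_add_measurable:
  fixes f :: "'a \<Rightarrow> nat \<Rightarrow> real"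
  assumes "\<forall>i'\<in>{1..k-1}. (\<lambda>x. f x i') \<in> borel_measurable M"
  shows "\<forall>i'\<in>{1..k-1}. (\<lambda>x. ((f x)(i := f x i + t)) i') \<in> borel_measurable M"
proof
  fix i' assume i': "i' \<in> {1..k-1}"
  show "(\<lambda>x. ((f x)(i := f x i + t)) i') \<in> borel_measurable M"
  proof (cases "i' = i")
    case True
    then show ?thesis using borel_measurable_add[OF assms[rule_format, OF i'] borel_measurable_const[of t]] by simp
  qed (use assms i' in simp)
qed

lemma (in finite_measure) ipw_minimizer_AE_no_coordinate_descent:
  assumes p: "\<forall>j\<in>{1..k}. p j \<in> borel_measurable M"
    and K: "\<forall>j\<in>{1..k}. K j \<in> M \<rightarrow>\<^sub>M prob_algebra borel"
    and l: "l \<in> borel_measurable borel"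
    and fstar: "admissible M p K l k fstar"
    and minimal: "\<forall>f. admissible M p K l k f \<longrightarrow> ipw_risk M p K l k fstar \<le> ipw_risk M p K l k f"
  shows "AE x in M. \<forall>i n.
    ipw_integrand p K l k fstar x \<le> ipw_integrand p K l k (\<lambda>x. (fstar x)(i := fstar x i + 1 / Suc n)) x \<and>
    ipw_integrand p K l k fstar x \<le> ipw_integrand p K l k (\<lambda>x. (fstar x)(i := fstar x i + - 1 / Suc n)) x"
proof -
  have "\<forall>i'\<in>{1..k-1}. (\<lambda>x. fstar x i') \<in> borel_measurable M"
    using fstar by (simp add: admissible_def)
  then have "AE x in M. ipw_integrand p K l k fstar x \<le>
      ipw_integrand p K l k (\<lambda>x. (fstar x)(i := fstar x i + t)) x" for i t
    by (intro ipw_minimizer_AE_le[OF p K l fstar minimal] fun_upd_add_measurable)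
  then show ?thesis unfolding AE_all_countable AE_conj_iff by blast
qed

theorem proposition2:
  fixes M :: "'x measure" and p :: "nat \<Rightarrow> 'x \<Rightarrow> real"
    and K :: "nat \<Rightarrow> 'x \<Rightarrow> real measure"
    and l l' :: "real \<Rightarrow> real" and c B :: real and k :: nat
    and fstar :: "'x \<Rightarrow> nat \<Rightarrow> real"
  assumes "prob_space M" and "k \<ge> 2"
    and "\<forall>j\<in>{1..k}. p j \<in> borel_measurable M"
    and "\<forall>j\<in>{1..k}. \<forall>x\<in>space M. p j x \<ge> 0"
    and "\<forall>x\<in>space M. (\<Sum>j\<in>{1..k}. p j x) = 1"
    and "AE x in M. \<forall>j\<in>{1..k}. p j x > 0"
    and "\<forall>j\<in>{1..k}. K j \<in> M \<rightarrow>\<^sub>M prob_algebra borel"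
    and "\<forall>j\<in>{1..k}. \<forall>x\<in>space M. AE y in K j x. 0 < y \<and> y \<le> B"
    and "AE x in M. inj_on (\<lambda>j. cond_mean K j x) {1..k}"
    and "convex_on UNIV l"
    and "\<forall>u. (l has_real_derivative l' u) (at u)"
    and "\<forall>u. l' u > 0"
    and "c \<ge> 1"
    and "admissible M p K l k fstar"
    and "\<forall>f. admissible M p K l k f \<longrightarrow> ipw_risk M p K l k fstar \<le> ipw_risk M p K l k f"
  shows "AE x in M. AITR_D k l' c (fstar x) = opt_AITR k c (\<lambda>j. cond_mean K j x)"
proof -
  interpret M: prob_space M by fact
  have l_meas: "l \<in> borel_measurable borel"
    using assms(11) by (intro borel_measurable_continuous_onI continuous_at_imp_continuous_on)
      (auto intro: DERIV_isCont)
  from AE_space assms(6) M.ipw_minimizer_AE_no_coordinate_descent[OF assms(3,7) l_meas assms(14,15)]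
  show ?thesis
  proof eventually_elim
    case (elim x)
    define mu where "mu j = cond_mean K j x" for j
    have mu_pos: "\<forall>j\<in>{1..k}. mu j > 0"
      unfolding mu_def using elim assms(7,8) by (intro ballI cond_mean_pos[where B=B]) auto
    have ipw: "ipw_integrand p K l k f x = cond_risk mu l k (f x)" for f
      unfolding mu_def using elim by (intro ipw_integrand_eq_cond_risk) auto
    have stationary: "\<forall>i\<in>{1..k-1}.
        (\<Sum>j\<in>{1..k}. mu j * l' (vinner k (simplex_vertex k j) (fstar x)) * simplex_vertex k j i) = 0"
      using cond_risk_stationary_if_no_coordinate_descent[OF assms(11)] elim(3)
      unfolding ipw by blast
    show ?case
      using AITR_D_eq_opt_AITR_if_stationary[OF assms(2) mu_pos assms(10-12) stationary]
      by (simp add: mu_def)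
  qed
qed

end
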